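(* Let $f_1,\dots,f_n$ be arbitrary linear functions. There exists $r>0$ such that for every real $\epsilon$ with $|\epsilon|<r$ and all permutations $\sigma,\rho$ of $[n]$: if $(f^{(\epsilon)})^\sigma\le(f^{(\epsilon)})^\rho$ then $f^\sigma\le f^\rho$.
   Context: A linear function is $f(x)=ax+b$ with $\alpha(f)=a$. For a real $\epsilon$, $f^{(\epsilon)}=f$ if $\alpha(f)\ne0$ and $f^{(\epsilon)}(x)=f(x)+\epsilon x$ if $\alpha(f)=0$. For a permutation $\sigma$, $f^\sigma=f_{\sigma(n)}\circ\cdots\circ f_{\sigma(1)}$ and $(f^{(\epsilon)})^\sigma=f^{(\epsilon)}_{\sigma(n)}\circ\cdots\circ f^{(\epsilon)}_{\sigma(1)}$. Inequalities between functions are pointwise. *)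

theory Defs
  imports "HOL-Analysis.Analysis" "HOL-Combinatorics.Permutations"
begin

text \<open>A linear function f(x) = a x + b is represented by its coefficient pair (a, b).\<close>
type_synonym linfun = "real \<times> real"

definition lin_eval :: "linfun \<Rightarrow> real \<Rightarrow> real" where
  "lin_eval f x = fst f * x + snd f"

definition alpha :: "linfun \<Rightarrow> real" where
  "alpha f = fst f"

definition perturb :: "real \<Rightarrow> linfun \<Rightarrow> linfun" where
  "perturb eps f = (if alpha f \<noteq> 0 then f else (fst f + eps, snd f))"

text \<open>f^sigma = f_{sigma(n)} o ... o f_{sigma(1)} for functions indexed by 0..n-1
  (index i here corresponds to i+1 in the paper): f_{sigma 0} is applied first.\<close>
definition perm_comp :: "nat \<Rightarrow> (nat \<Rightarrow> linfun) \<Rightarrow> (nat \<Rightarrow> nat) \<Rightarrow> real \<Rightarrow> real" where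
  "perm_comp n fs \<sigma> = foldl (\<lambda>g i. lin_eval (fs (\<sigma> i)) \<circ> g) id [0..<n]"

end

theory Submission
  imports Defs
begin

text \<open>Every composite f^\<sigma> is itself affine, with slope and intercept depending
  continuously on the coefficients. For affine maps, f^\<sigma> \<le> f^\<rho> means equal slopes and
  ordered intercepts, so its failure is an open condition on the coefficients: it is
  witnessed either by different slopes or by strictly reversed intercepts, and both
  persist under a small perturbation \<epsilon>. As there are only finitely many pairs
  (\<sigma>, \<rho>), one radius r works for all of them.\<close>

fun comp_slope :: "nat \<Rightarrow> (nat \<Rightarrow> linfun) \<Rightarrow> (nat \<Rightarrow> nat) \<Rightarrow> real" where
  "comp_slope 0 fs \<sigma> = 1"
| "comp_slope (Suc n) fs \<sigma> = fst (fs (\<sigma> n)) * comp_slope n fs \<sigma>"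

fun comp_intercept :: "nat \<Rightarrow> (nat \<Rightarrow> linfun) \<Rightarrow> (nat \<Rightarrow> nat) \<Rightarrow> real" where
  "comp_intercept 0 fs \<sigma> = 0"
| "comp_intercept (Suc n) fs \<sigma> = fst (fs (\<sigma> n)) * comp_intercept n fs \<sigma> + snd (fs (\<sigma> n))"

lemma perm_comp_affine: "perm_comp n fs \<sigma> x = comp_slope n fs \<sigma> * x + comp_intercept n fs \<sigma>"
proof (induction n)
  case 0
  then show ?case by (simp add: perm_comp_def)
next
  case (Suc n)
  have "perm_comp (Suc n) fs \<sigma> = lin_eval (fs (\<sigma> n)) \<circ> perm_comp n fs \<sigma>"
    by (simp add: perm_comp_def)
  with Suc show ?case by (simp add: lin_eval_def algebra_simps)
qed

lemma affine_le_iff: "(\<forall>x::real. a * x + b \<le> c * x + d) \<longleftrightarrow> a = c \<and> b \<le> d"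
proof
  assume le: "\<forall>x. a * x + b \<le> c * x + d"
  show "a = c \<and> b \<le> d"
  proof
    show "b \<le> d" using le[rule_format, of 0] by simp
    show "a = c"
    proof (rule ccontr)
      assume "a \<noteq> c"
      have "a * ((d - b + 1) / (a - c)) + b \<le> c * ((d - b + 1) / (a - c)) + d"
        using le by blast
      then have "(a - c) * ((d - b + 1) / (a - c)) \<le> d - b"
        by (simp only: algebra_simps)
      with \<open>a \<noteq> c\<close> show False by simp
    qed
  qed
qed simp

lemma eventually_affine_not_le:
  fixes a b c d :: "'a \<Rightarrow> real"
  assumes "(a \<longlongrightarrow> a0) F" "(b \<longlongrightarrow> b0) F" "(c \<longlongrightarrow> c0) F" "(d \<longlongrightarrow> d0) F"
    and "\<not> (\<forall>x. a0 * x + b0 \<le> c0 * x + d0)"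
  shows "eventually (\<lambda>t. \<not> (\<forall>x. a t * x + b t \<le> c t * x + d t)) F"
proof (cases "a0 = c0")
  case True
  with assms(5) have "b0 - d0 > 0" by (simp add: affine_le_iff)
  from order_tendstoD(1)[OF tendsto_diff[OF assms(2,4)] this]
  show ?thesis by (rule eventually_mono) (simp add: affine_le_iff)
next
  case False
  then have "a0 - c0 \<noteq> 0" by simp
  from tendsto_imp_eventually_ne[OF tendsto_diff[OF assms(1,3)] this]
  show ?thesis by (rule eventually_mono) (simp add: affine_le_iff)
qed

lemma tendsto_fst_perturb: "((\<lambda>e. fst (perturb e f)) \<longlongrightarrow> fst (perturb c f)) (nhds c)"
  by (auto simp: perturb_def intro!: tendsto_intros filterlim_ident)

lemma snd_perturb [simp]: "snd (perturb e f) = snd f"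
  by (simp add: perturb_def)

lemma tendsto_comp_slope_perturb:
  "((\<lambda>e. comp_slope n (\<lambda>i. perturb e (fs i)) \<sigma>)
     \<longlongrightarrow> comp_slope n (\<lambda>i. perturb c (fs i)) \<sigma>) (nhds c)"
  by (induction n) (auto intro!: tendsto_intros tendsto_fst_perturb)

lemma tendsto_comp_intercept_perturb:
  "((\<lambda>e. comp_intercept n (\<lambda>i. perturb e (fs i)) \<sigma>)
     \<longlongrightarrow> comp_intercept n (\<lambda>i. perturb c (fs i)) \<sigma>) (nhds c)"
  by (induction n) (auto intro!: tendsto_intros tendsto_fst_perturb)

lemma perturb_zero: "perturb 0 f = f"
  by (simp add: perturb_def)

lemma eventually_perturb_le_imp_le:
  "eventually (\<lambda>e. (\<forall>x. perm_comp n (\<lambda>i. perturb e (fs i)) \<sigma> x \<le> perm_comp n (\<lambda>i. perturb e (fs i)) \<rho> x)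
     \<longrightarrow> (\<forall>x. perm_comp n fs \<sigma> x \<le> perm_comp n fs \<rho> x)) (nhds 0)"
proof (cases "\<forall>x. perm_comp n fs \<sigma> x \<le> perm_comp n fs \<rho> x")
  case False
  have "((\<lambda>e. comp_slope n (\<lambda>i. perturb e (fs i)) \<tau>) \<longlongrightarrow> comp_slope n fs \<tau>) (nhds 0)"
    "((\<lambda>e. comp_intercept n (\<lambda>i. perturb e (fs i)) \<tau>) \<longlongrightarrow> comp_intercept n fs \<tau>) (nhds 0)"
    for \<tau>
    using tendsto_comp_slope_perturb[where c=0] tendsto_comp_intercept_perturb[where c=0]
    by (simp_all add: perturb_zero)
  with False have "eventually (\<lambda>e. \<not> (\<forall>x. perm_comp n (\<lambda>i. perturb e (fs i)) \<sigma> x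
                                  \<le> perm_comp n (\<lambda>i. perturb e (fs i)) \<rho> x)) (nhds 0)"
    unfolding perm_comp_affine by (intro eventually_affine_not_le)
  then show ?thesis by (rule eventually_mono) blast
qed simp

theorem mainTheorem15:
  fixes n :: nat and fs :: "nat \<Rightarrow> linfun"
  shows "\<exists>r>0. \<forall>eps::real. \<bar>eps\<bar> < r \<longrightarrow>
           (\<forall>\<sigma> \<rho>. \<sigma> permutes {..<n} \<longrightarrow> \<rho> permutes {..<n} \<longrightarrow>
              (\<forall>x. perm_comp n (\<lambda>i. perturb eps (fs i)) \<sigma> x \<le> perm_comp n (\<lambda>i. perturb eps (fs i)) \<rho> x) \<longrightarrow>
              (\<forall>x. perm_comp n fs \<sigma> x \<le> perm_comp n fs \<rho> x))"
proof -
  let ?P = "{\<sigma>. \<sigma> permutes {..<n}}"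
  have "finite ?P" using finite_permutations[of "{..<n}"] by simp
  then have "eventually (\<lambda>eps. \<forall>\<sigma>\<in>?P. \<forall>\<rho>\<in>?P.
      (\<forall>x. perm_comp n (\<lambda>i. perturb eps (fs i)) \<sigma> x \<le> perm_comp n (\<lambda>i. perturb eps (fs i)) \<rho> x)
      \<longrightarrow> (\<forall>x. perm_comp n fs \<sigma> x \<le> perm_comp n fs \<rho> x)) (nhds 0)"
    by (intro eventually_ball_finite ballI eventually_perturb_le_imp_le)
  then obtain r :: real where "r > 0" and "\<And>eps. dist eps 0 < r \<Longrightarrow> \<forall>\<sigma>\<in>?P. \<forall>\<rho>\<in>?P.
      (\<forall>x. perm_comp n (\<lambda>i. perturb eps (fs i)) \<sigma> x \<le> perm_comp n (\<lambda>i. perturb eps (fs i)) \<rho> x)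
      \<longrightarrow> (\<forall>x. perm_comp n fs \<sigma> x \<le> perm_comp n fs \<rho> x)"
    unfolding eventually_nhds_metric by blast
  with \<open>r > 0\<close> show ?thesis by (auto simp: dist_real_def)
qed

end
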